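(* Let $M$ be a graded quasi-primaryful $R$-module and $Y\subseteq qp.Spec_g(M)$. Then $Y$ is an irreducible closed subset of $qp.Spec_g(M)$ (quasi-Zariski topology) if and only if $Y=qp\text{-}V_M^g(Q)$ for some $Q\in qp.Spec_g(M)$. In particular, every irreducible closed subset of $qp.Spec_g(M)$ has a generic point.
   Context: $R=\bigoplus_{g\in G}R_g$ is a graded commutative ring with identity graded by a group $G$, $h(R)=\bigcup_g R_g$; $M$ is a graded $R$-module, $h(M)$ its homogeneous elements. $Gr(I)$ is the graded radical of a graded ideal $I$. $(K:_RM)=\{r: rM\subseteq K\}$. Graded prime submodule: proper graded $P$ with $rm\in P$ ($r\in h(R), m\in h(M)$) implying $m\in P$ or $r\in(P:_RM)$. $Gr_M(K)$: intersection of graded prime submodules containing $K$ ($M$ if none). Graded primeful property of $K$: for each graded prime $p\supseteq(K:_RM)$ there is a graded prime submodule $P\supseteq K$ with $(P:_RM)=p$. Graded quasi-primary submodule: proper graded $Q$ with $rm\in Q$ ($r\in h(R),m\in h(M)$) implying $r\in Gr((Q:_RM))$ or $m\in Gr_M(Q)$. $qp.Spec_g(M)$: graded quasi-primary submodules with the graded primeful property. $qp\text{-}V_M^g(K)=\{Q\in qp.Spec_g(M): Gr((Q:_RM))\supseteq Gr((K:_RM))\}$; the quasi-Zariski topology has closed sets exactly these. A graded quasi-primary ideal of $R$ is a proper graded ideal $q$ with $ab\in q$ ($a,b\in h(R)$) implying $a\in Gr(q)$ or $b\in Gr(q)$. $M$ is graded quasi-primaryful if $M=0$, or $M\ne 0$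 and for every graded quasi-primary ideal $q\supseteq\mathrm{Ann}(M)$ of $R$ there is $Q\in qp.Spec_g(M)$ with $Gr((Q:_RM))=Gr(q)$. A subset $A$ of a topological space is irreducible if whenever $A\subseteq A_1\cup A_2$ with $A_1,A_2$ closed, then $A\subseteq A_1$ or $A\subseteq A_2$. A generic point of a closed set $Y$ is $y\in Y$ with $Y=cl(\{y\})$. *)

theory Defs
  imports Complex_Main
begin

definition add_subgroup :: "'a::ab_group_add set \<Rightarrow> bool" where
  "add_subgroup S \<longleftrightarrow> 0 \<in> S \<and> (\<forall>x\<in>S. \<forall>y\<in>S. x + y \<in> S) \<and> (\<forall>x\<in>S. - x \<in> S)"

definition gdecomp :: "('g \<Rightarrow> 'a::comm_monoid_add set) \<Rightarrow> 'a \<Rightarrow> ('g \<Rightarrow> 'a) \<Rightarrow> bool" where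
  "gdecomp A x c \<longleftrightarrow> finite {g. c g \<noteq> 0} \<and> (\<forall>g. c g \<in> A g) \<and> x = (\<Sum>g\<in>{g. c g \<noteq> 0}. c g)"

definition direct_grading :: "('g \<Rightarrow> 'a::ab_group_add set) \<Rightarrow> bool" where
  "direct_grading A \<longleftrightarrow> (\<forall>g. add_subgroup (A g)) \<and> (\<forall>x. \<exists>!c. gdecomp A x c)"

definition gcomp :: "('g \<Rightarrow> 'a::comm_monoid_add set) \<Rightarrow> 'a \<Rightarrow> 'g \<Rightarrow> 'a" where
  "gcomp A x g = (THE c. gdecomp A x c) g"

definition homog :: "('g \<Rightarrow> 'a set) \<Rightarrow> 'a set" where
  "homog A = (\<Union>g. A g)"

text \<open>R (the whole type 'r) is a G-graded commutative ring with identity.\<close>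
definition graded_ring :: "('g::group_add \<Rightarrow> 'r::comm_ring_1 set) \<Rightarrow> bool" where
  "graded_ring Rg \<longleftrightarrow> direct_grading Rg \<and>
     (\<forall>g h a b. a \<in> Rg g \<longrightarrow> b \<in> Rg h \<longrightarrow> a * b \<in> Rg (g + h))"

text \<open>M (the whole type 'm) is a G-graded R-module with scalar multiplication smult.\<close>
definition graded_module ::
  "('g::group_add \<Rightarrow> 'r::comm_ring_1 set) \<Rightarrow> ('g \<Rightarrow> 'm::ab_group_add set) \<Rightarrow> ('r \<Rightarrow> 'm \<Rightarrow> 'm) \<Rightarrow> bool" where
  "graded_module Rg Mg smult \<longleftrightarrow> graded_ring Rg \<and> module smult \<and> direct_grading Mg \<and>
     (\<forall>g h r m. r \<in> Rg g \<longrightarrow> m \<in> Mg h \<longrightarrow> smult r m \<in> Mg (g + h))"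

definition is_ideal :: "'r::comm_ring_1 set \<Rightarrow> bool" where
  "is_ideal I \<longleftrightarrow> add_subgroup I \<and> (\<forall>r x. x \<in> I \<longrightarrow> r * x \<in> I)"

definition graded_ideal :: "('g \<Rightarrow> 'r::comm_ring_1 set) \<Rightarrow> 'r set \<Rightarrow> bool" where
  "graded_ideal Rg I \<longleftrightarrow> is_ideal I \<and> (\<forall>x\<in>I. \<forall>g. gcomp Rg x g \<in> I)"

definition is_submodule :: "('r::comm_ring_1 \<Rightarrow> 'm::ab_group_add \<Rightarrow> 'm) \<Rightarrow> 'm set \<Rightarrow> bool" where
  "is_submodule smult N \<longleftrightarrow> add_subgroup N \<and> (\<forall>r x. x \<in> N \<longrightarrow> smult r x \<in> N)"

definition graded_submodule ::
  "('g \<Rightarrow> 'm::ab_group_add set) \<Rightarrow> ('r::comm_ring_1 \<Rightarrow> 'm \<Rightarrow> 'm) \<Rightarrow> 'm set \<Rightarrow> bool" where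
  "graded_submodule Mg smult N \<longleftrightarrow> is_submodule smult N \<and> (\<forall>x\<in>N. \<forall>g. gcomp Mg x g \<in> N)"

definition colon :: "('r \<Rightarrow> 'm \<Rightarrow> 'm) \<Rightarrow> 'm set \<Rightarrow> 'r set" where
  "colon smult K = {r. \<forall>m. smult r m \<in> K}"

definition Gr :: "('g \<Rightarrow> 'r::comm_ring_1 set) \<Rightarrow> 'r set \<Rightarrow> 'r set" where
  "Gr Rg I = {x. \<forall>g. \<exists>n>0. (gcomp Rg x g) ^ n \<in> I}"

definition graded_prime_ideal :: "('g \<Rightarrow> 'r::comm_ring_1 set) \<Rightarrow> 'r set \<Rightarrow> bool" where
  "graded_prime_ideal Rg p \<longleftrightarrow> graded_ideal Rg p \<and> p \<noteq> UNIV \<and>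
     (\<forall>a\<in>homog Rg. \<forall>b\<in>homog Rg. a * b \<in> p \<longrightarrow> a \<in> p \<or> b \<in> p)"

definition graded_quasi_primary_ideal :: "('g \<Rightarrow> 'r::comm_ring_1 set) \<Rightarrow> 'r set \<Rightarrow> bool" where
  "graded_quasi_primary_ideal Rg q \<longleftrightarrow> graded_ideal Rg q \<and> q \<noteq> UNIV \<and>
     (\<forall>a\<in>homog Rg. \<forall>b\<in>homog Rg. a * b \<in> q \<longrightarrow> a \<in> Gr Rg q \<or> b \<in> Gr Rg q)"

definition graded_prime_submodule ::
  "('g \<Rightarrow> 'r::comm_ring_1 set) \<Rightarrow> ('g \<Rightarrow> 'm::ab_group_add set) \<Rightarrow> ('r \<Rightarrow> 'm \<Rightarrow> 'm) \<Rightarrow> 'm set \<Rightarrow> bool" where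
  "graded_prime_submodule Rg Mg smult P \<longleftrightarrow> graded_submodule Mg smult P \<and> P \<noteq> UNIV \<and>
     (\<forall>r\<in>homog Rg. \<forall>m\<in>homog Mg. smult r m \<in> P \<longrightarrow> m \<in> P \<or> r \<in> colon smult P)"

text \<open>Gr_M(K): intersection of graded prime submodules containing K (UNIV if none).\<close>
definition GrM ::
  "('g \<Rightarrow> 'r::comm_ring_1 set) \<Rightarrow> ('g \<Rightarrow> 'm::ab_group_add set) \<Rightarrow> ('r \<Rightarrow> 'm \<Rightarrow> 'm) \<Rightarrow> 'm set \<Rightarrow> 'm set" where
  "GrM Rg Mg smult K = \<Inter> {P. graded_prime_submodule Rg Mg smult P \<and> K \<subseteq> P}"

definition graded_primeful ::
  "('g \<Rightarrow> 'r::comm_ring_1 set) \<Rightarrow> ('g \<Rightarrow> 'm::ab_group_add set) \<Rightarrow> ('r \<Rightarrow> 'm \<Rightarrow> 'm) \<Rightarrow> 'm set \<Rightarrow> bool" where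
  "graded_primeful Rg Mg smult K \<longleftrightarrow>
     (\<forall>p. graded_prime_ideal Rg p \<and> colon smult K \<subseteq> p \<longrightarrow>
        (\<exists>P. graded_prime_submodule Rg Mg smult P \<and> K \<subseteq> P \<and> colon smult P = p))"

definition graded_quasi_primary_submodule ::
  "('g \<Rightarrow> 'r::comm_ring_1 set) \<Rightarrow> ('g \<Rightarrow> 'm::ab_group_add set) \<Rightarrow> ('r \<Rightarrow> 'm \<Rightarrow> 'm) \<Rightarrow> 'm set \<Rightarrow> bool" where
  "graded_quasi_primary_submodule Rg Mg smult Q \<longleftrightarrow> graded_submodule Mg smult Q \<and> Q \<noteq> UNIV \<and>
     (\<forall>r\<in>homog Rg. \<forall>m\<in>homog Mg. smult r m \<in> Q \<longrightarrow>
        r \<in> Gr Rg (colon smult Q) \<or> m \<in> GrM Rg Mg smult Q)"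

definition qpSpec ::
  "('g \<Rightarrow> 'r::comm_ring_1 set) \<Rightarrow> ('g \<Rightarrow> 'm::ab_group_add set) \<Rightarrow> ('r \<Rightarrow> 'm \<Rightarrow> 'm) \<Rightarrow> 'm set set" where
  "qpSpec Rg Mg smult = {Q. graded_quasi_primary_submodule Rg Mg smult Q \<and> graded_primeful Rg Mg smult Q}"

definition qpV ::
  "('g \<Rightarrow> 'r::comm_ring_1 set) \<Rightarrow> ('g \<Rightarrow> 'm::ab_group_add set) \<Rightarrow> ('r \<Rightarrow> 'm \<Rightarrow> 'm) \<Rightarrow> 'm set \<Rightarrow> 'm set set" where
  "qpV Rg Mg smult K = {Q \<in> qpSpec Rg Mg smult. Gr Rg (colon smult K) \<subseteq> Gr Rg (colon smult Q)}"

definition qp_closed ::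
  "('g \<Rightarrow> 'r::comm_ring_1 set) \<Rightarrow> ('g \<Rightarrow> 'm::ab_group_add set) \<Rightarrow> ('r \<Rightarrow> 'm \<Rightarrow> 'm) \<Rightarrow> 'm set set \<Rightarrow> bool" where
  "qp_closed Rg Mg smult Y \<longleftrightarrow> (\<exists>K. graded_submodule Mg smult K \<and> Y = qpV Rg Mg smult K)"

definition qp_closure ::
  "('g \<Rightarrow> 'r::comm_ring_1 set) \<Rightarrow> ('g \<Rightarrow> 'm::ab_group_add set) \<Rightarrow> ('r \<Rightarrow> 'm \<Rightarrow> 'm) \<Rightarrow> 'm set set \<Rightarrow> 'm set set" where
  "qp_closure Rg Mg smult A = \<Inter> {Y. qp_closed Rg Mg smult Y \<and> A \<subseteq> Y}"

definition qp_irreducible ::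
  "('g \<Rightarrow> 'r::comm_ring_1 set) \<Rightarrow> ('g \<Rightarrow> 'm::ab_group_add set) \<Rightarrow> ('r \<Rightarrow> 'm \<Rightarrow> 'm) \<Rightarrow> 'm set set \<Rightarrow> bool" where
  "qp_irreducible Rg Mg smult A \<longleftrightarrow> A \<noteq> {} \<and>
     (\<forall>A1 A2. qp_closed Rg Mg smult A1 \<and> qp_closed Rg Mg smult A2 \<and> A \<subseteq> A1 \<union> A2 \<longrightarrow>
        A \<subseteq> A1 \<or> A \<subseteq> A2)"

definition quasi_primaryful ::
  "('g \<Rightarrow> 'r::comm_ring_1 set) \<Rightarrow> ('g \<Rightarrow> 'm::ab_group_add set) \<Rightarrow> ('r \<Rightarrow> 'm \<Rightarrow> 'm) \<Rightarrow> bool" where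
  "quasi_primaryful Rg Mg smult \<longleftrightarrow> (UNIV :: 'm set) = {0} \<or>
     ((UNIV :: 'm set) \<noteq> {0} \<and>
      (\<forall>q. graded_quasi_primary_ideal Rg q \<and> colon smult {0} \<subseteq> q \<longrightarrow>
         (\<exists>Q\<in>qpSpec Rg Mg smult. Gr Rg (colon smult Q) = Gr Rg q)))"

end

theory Submission
  imports Defs
begin

text \<open>
  The closed set qp-V(K) depends on K only through Gr((K:M)). For a graded submodule Q with the
  primeful property, Gr((Q:M)) is the intersection of the prime ideals (P:M) over the graded prime
  submodules P containing Q; consequently every condition "I is contained in Gr((Q:M))" cuts out a
  closed set, and for quasi-primary Q the radical Gr((Q:M)) is prime on homogeneous elements.

  Let Y = qp-V(K) be irreducible, q = (K:M), and let a, b be homogeneous with ab in q. Then Y is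
  covered by the two closed sets where a, resp. b, lies in Gr((Q:M)), so it lies in one of them,
  say the first. If a were not in Gr(q), graded prime avoidance would give a graded prime p
  containing q but not a, and quasi-primaryfulness a point Q of Y with Gr((Q:M)) = p, a
  contradiction. Hence q is quasi-primary, and quasi-primaryfulness gives a point Q with
  Gr((Q:M)) = Gr(q), that is Y = qp-V(Q). Conversely qp-V(Q) is the closure of the point Q.
\<close>

section \<open>Gradings\<close>

lemma add_subgroup_sum:
  assumes "add_subgroup N" "\<And>i. i \<in> S \<Longrightarrow> f i \<in> N"
  shows "sum f S \<in> N"
  using assms(2)
  by (induction S rule: infinite_finite_induct) (use assms(1) in \<open>auto simp: add_subgroup_def\<close>)

lemma gcomp_unique:
  assumes "direct_grading A" "gdecomp A x c"
  shows "gcomp A x = c"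
proof -
  have "\<exists>!c. gdecomp A x c" using assms(1) by (simp add: direct_grading_def)
  then show ?thesis using assms(2) unfolding gcomp_def by (metis the_equality)
qed

lemma gdecomp_gcomp:
  assumes "direct_grading A"
  shows "gdecomp A x (gcomp A x)"
  using assms gcomp_unique unfolding direct_grading_def by metis

lemma gcomp_in: "direct_grading A \<Longrightarrow> gcomp A x g \<in> A g"
  using gdecomp_gcomp[of A x] by (simp add: gdecomp_def)

lemma gcomp_in_homog: "direct_grading A \<Longrightarrow> gcomp A x g \<in> homog A"
  using gcomp_in[of A x g] by (auto simp: homog_def)

lemma finite_gcomp_support: "direct_grading A \<Longrightarrow> finite {g. gcomp A x g \<noteq> 0}"
  using gdecomp_gcomp[of A x] by (simp add: gdecomp_def)

lemma sum_gcomp: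
  assumes "direct_grading A" "finite S" "{g. gcomp A x g \<noteq> 0} \<subseteq> S"
  shows "(\<Sum>g\<in>S. gcomp A x g) = x"
proof -
  have "(\<Sum>g\<in>S. gcomp A x g) = (\<Sum>g\<in>{g. gcomp A x g \<noteq> 0}. gcomp A x g)"
    by (rule sum.mono_neutral_right) (use assms in auto)
  also have "\<dots> = x"
    using gdecomp_gcomp[OF assms(1), of x] by (simp add: gdecomp_def)
  finally show ?thesis .
qed

lemma sum_gcomp_support:
  assumes "direct_grading A"
  shows "(\<Sum>g\<in>{g. gcomp A x g \<noteq> 0}. gcomp A x g) = x"
  using gdecomp_gcomp[OF assms, of x] by (simp add: gdecomp_def)

lemma gcomp_eqI:
  assumes "direct_grading A" "finite S" "{g. c g \<noteq> 0} \<subseteq> S" "\<And>g. c g \<in> A g"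
    and "x = (\<Sum>g\<in>S. c g)"
  shows "gcomp A x = c"
proof (rule gcomp_unique[OF assms(1)])
  have "(\<Sum>g\<in>S. c g) = (\<Sum>g\<in>{g. c g \<noteq> 0}. c g)"
    by (rule sum.mono_neutral_right) (use assms in auto)
  then show "gdecomp A x c"
    using assms finite_subset by (auto simp: gdecomp_def)
qed

lemma gcomp_add:
  assumes "direct_grading A"
  shows "gcomp A (x + y) g = gcomp A x g + gcomp A y g"
proof -
  let ?S = "{g. gcomp A x g \<noteq> 0} \<union> {g. gcomp A y g \<noteq> 0}"
  have fin: "finite ?S"
    using finite_gcomp_support[OF assms] by simp
  have "gcomp A (x + y) = (\<lambda>g. gcomp A x g + gcomp A y g)"
  proof (rule gcomp_eqI[OF assms fin])
    show "gcomp A x g + gcomp A y g \<in> A g" for g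
      using assms gcomp_in[OF assms] by (auto simp: direct_grading_def add_subgroup_def)
    show "x + y = (\<Sum>g\<in>?S. gcomp A x g + gcomp A y g)"
      using sum_gcomp[OF assms fin] by (simp add: sum.distrib)
  qed auto
  then show ?thesis by simp
qed

lemma gcomp_of_homog:
  assumes "direct_grading A" "x \<in> A h"
  shows "gcomp A x = (\<lambda>g. if g = h then x else 0)"
  by (rule gcomp_eqI[OF assms(1), of "{h}"])
    (use assms in \<open>auto simp: direct_grading_def add_subgroup_def\<close>)

lemma gcomp_additive_shift:
  fixes A :: "'g::group_add \<Rightarrow> 'a::ab_group_add set" and B :: "'g \<Rightarrow> 'b::ab_group_add set"
  assumes "direct_grading A" "direct_grading B"
    and degree: "\<And>g r. r \<in> A g \<Longrightarrow> \<phi> r \<in> B (g + h)"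
    and additive: "\<And>S (c :: 'g \<Rightarrow> 'a). \<phi> (\<Sum>g\<in>S. c g) = (\<Sum>g\<in>S. \<phi> (c g))"
  shows "gcomp B (\<phi> x) k = \<phi> (gcomp A x (k - h))"
proof -
  let ?T = "{g. gcomp A x g \<noteq> 0}"
  have "\<phi> 0 = 0" using additive[of _ "{}"] by simp
  then have "{k. \<phi> (gcomp A x (k - h)) \<noteq> 0} \<subseteq> (\<lambda>g. g + h) ` ?T"
    by (force intro: image_eqI[where x="_ - h"])
  moreover have "\<phi> x = (\<Sum>k\<in>(\<lambda>g. g + h) ` ?T. \<phi> (gcomp A x (k - h)))"
    using sum_gcomp_support[OF assms(1), of x] additive[of "gcomp A x" ?T]
    by (simp add: sum.reindex inj_on_def)
  moreover have "\<phi> (gcomp A x (k - h)) \<in> B k" for k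
    using degree[OF gcomp_in[OF assms(1)], of x "k - h"] by simp
  ultimately have "gcomp B (\<phi> x) = (\<lambda>k. \<phi> (gcomp A x (k - h)))"
    using finite_gcomp_support[OF assms(1), of x] by (intro gcomp_eqI[OF assms(2)]) auto
  then show ?thesis by simp
qed

section \<open>Graded ideals and graded prime avoidance\<close>

lemma zero_in_graded_ideal: "graded_ideal A I \<Longrightarrow> 0 \<in> I"
  by (simp add: graded_ideal_def is_ideal_def add_subgroup_def)

lemma graded_ideal_Union_chain:
  assumes "C \<noteq> {}" "subset.chain {I. graded_ideal A I} C"
  shows "graded_ideal A (\<Union>C)"
proof -
  have ideals: "\<And>I. I \<in> C \<Longrightarrow> graded_ideal A I"
    and chain: "\<And>I J. I \<in> C \<Longrightarrow> J \<in> C \<Longrightarrow> I \<subseteq> J \<or> J \<subseteq> I"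
    using assms(2) by (auto simp: subset_chain_def)
  have "x + y \<in> \<Union>C" if xy: "x \<in> \<Union>C" "y \<in> \<Union>C" for x y
  proof -
    obtain I J where "I \<in> C" "J \<in> C" "x \<in> I" "y \<in> J"
      using xy by blast
    then obtain K where "K \<in> C" "x \<in> K" "y \<in> K"
      using chain by blast
    then show ?thesis
      using ideals[of K] unfolding graded_ideal_def is_ideal_def add_subgroup_def by blast
  qed
  moreover have "0 \<in> \<Union>C"
    using assms(1) ideals unfolding graded_ideal_def is_ideal_def add_subgroup_def by blast
  moreover have "- x \<in> \<Union>C \<and> r * x \<in> \<Union>C \<and> gcomp A x g \<in> \<Union>C" if "x \<in> \<Union>C" for x r g
    using that ideals unfolding graded_ideal_def is_ideal_def add_subgroup_def by blast
  ultimately show ?thesis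
    unfolding graded_ideal_def is_ideal_def add_subgroup_def by blast
qed

lemma graded_ideal_subset_Gr: "graded_ideal A I \<Longrightarrow> I \<subseteq> Gr A I"
  unfolding Gr_def graded_ideal_def by (auto intro: exI[of _ 1])

lemma Gr_mono: "I \<subseteq> J \<Longrightarrow> Gr A I \<subseteq> Gr A J"
  unfolding Gr_def by blast

lemma graded_quasi_primary_if_prime:
  "graded_prime_ideal A p \<Longrightarrow> graded_quasi_primary_ideal A p"
  using graded_ideal_subset_Gr
  unfolding graded_prime_ideal_def graded_quasi_primary_ideal_def by blast

locale gr_ring =
  fixes Rg :: "'g::group_add \<Rightarrow> 'r::comm_ring_1 set"
  assumes graded_ring: "graded_ring Rg"
begin

lemma direct_grading: "direct_grading Rg"
  using graded_ring by (simp add: graded_ring_def)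

lemma mult_degree: "a \<in> Rg g \<Longrightarrow> b \<in> Rg h \<Longrightarrow> a * b \<in> Rg (g + h)"
  using graded_ring by (simp add: graded_ring_def)

lemma gcomp_mult_homog: "r \<in> Rg h \<Longrightarrow> gcomp Rg (x * r) k = gcomp Rg x (k - h) * r"
  by (rule gcomp_additive_shift[OF direct_grading direct_grading])
    (simp_all add: mult_degree sum_distrib_right)

lemma one_in_degree_zero: "1 \<in> Rg 0"
proof -
  let ?e = "gcomp Rg 1"
  \<comment> \<open>Multiplying a homogeneous r by the component e_g of 1 gives the component of r of degree
    g + deg r, so 1 = sum of e_k forces e_g = e_g * 1 = 0 for g \<noteq> 0.\<close>
  have e_mult: "?e g * r = (if g = 0 then r else 0)" if "r \<in> Rg h" for g h r
  proof -
    have "g + h = h \<longleftrightarrow> g = 0" by (metis add_0 add_right_cancel)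
    then show ?thesis
      using gcomp_mult_homog[OF that, of 1 "g + h"] gcomp_of_homog[OF direct_grading that]
      by (simp add: add.assoc)
  qed
  have "?e g = 0" if "g \<noteq> 0" for g
  proof -
    have "?e g = ?e g * (\<Sum>k\<in>{k. ?e k \<noteq> 0}. ?e k)"
      by (simp add: sum_gcomp_support[OF direct_grading])
    also have "\<dots> = 0"
      using e_mult[OF gcomp_in[OF direct_grading]] that by (simp add: sum_distrib_left)
    finally show ?thesis .
  qed
  then have "(\<Sum>k\<in>{0}. ?e k) = 1"
    by (intro sum_gcomp[OF direct_grading]) auto
  then show ?thesis
    using gcomp_in[OF direct_grading, of 1 0] by simp
qed

lemma mult_homog: "a \<in> homog Rg \<Longrightarrow> b \<in> homog Rg \<Longrightarrow> a * b \<in> homog Rg"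
  unfolding homog_def using mult_degree by blast

lemma one_homog: "1 \<in> homog Rg"
  using one_in_degree_zero by (auto simp: homog_def)

lemma power_homog: "a \<in> homog Rg \<Longrightarrow> a ^ n \<in> homog Rg"
  by (induction n) (simp_all add: one_homog mult_homog)

lemma homog_in_Gr_iff:
  assumes "0 \<in> J" "y \<in> homog Rg"
  shows "y \<in> Gr Rg J \<longleftrightarrow> (\<exists>n>0. y ^ n \<in> J)"
proof -
  obtain h where "y \<in> Rg h" using assms(2) by (auto simp: homog_def)
  then have "gcomp Rg y h = y" "\<And>g. g \<noteq> h \<Longrightarrow> gcomp Rg y g = 0"
    using gcomp_of_homog[OF direct_grading] by simp_all
  moreover have "\<exists>n>0. (0::'r) ^ n \<in> J"
    using assms(1) by (intro exI[of _ 1]) simp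
  ultimately show ?thesis
    unfolding Gr_def by (smt (verit) mem_Collect_eq)
qed

lemma homog_in_Gr_if_power:
  assumes "0 \<in> J" "a \<in> homog Rg" "n > 0" "a ^ n \<in> Gr Rg J"
  shows "a \<in> Gr Rg J"
proof -
  obtain k where "k > 0" "(a ^ n) ^ k \<in> J"
    using assms homog_in_Gr_iff power_homog by blast
  then have "n * k > 0" "a ^ (n * k) \<in> J"
    using assms(3) by (simp_all add: power_mult)
  then show ?thesis
    using assms(1,2) homog_in_Gr_iff by blast
qed

lemma graded_prime_ideal_proper:
  assumes "graded_prime_ideal Rg p"
  shows "1 \<notin> p"
proof
  assume "1 \<in> p"
  then have "r * 1 \<in> p" for r
    using assms unfolding graded_prime_ideal_def graded_ideal_def is_ideal_def by blast
  then show False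
    using assms by (auto simp: graded_prime_ideal_def)
qed

lemma graded_prime_ideal_power:
  assumes "graded_prime_ideal Rg p" "y \<in> homog Rg" "y ^ n \<in> p"
  shows "y \<in> p"
  using assms(3)
proof (induction n)
  case 0
  then show ?case using graded_prime_ideal_proper[OF assms(1)] by simp
next
  case (Suc n)
  then show ?case
    using assms(1,2) power_homog[OF assms(2)] by (auto simp: graded_prime_ideal_def)
qed

lemma Gr_graded_prime_ideal:
  assumes "graded_prime_ideal Rg p"
  shows "Gr Rg p = p"
proof
  have ideal: "graded_ideal Rg p"
    using assms by (simp add: graded_prime_ideal_def)
  show "p \<subseteq> Gr Rg p"
    by (rule graded_ideal_subset_Gr[OF ideal])
  show "Gr Rg p \<subseteq> p"
  proof
    fix x assume "x \<in> Gr Rg p"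
    then have "gcomp Rg x g \<in> p" for g
      using graded_prime_ideal_power[OF assms gcomp_in_homog[OF direct_grading]]
      unfolding Gr_def by blast
    then have "(\<Sum>g\<in>{g. gcomp Rg x g \<noteq> 0}. gcomp Rg x g) \<in> p"
      using ideal by (intro add_subgroup_sum) (auto simp: graded_ideal_def is_ideal_def)
    then show "x \<in> p"
      by (simp add: sum_gcomp_support[OF direct_grading])
  qed
qed

lemma graded_ideal_add_principal:
  assumes p: "graded_ideal Rg p" and a: "a \<in> Rg h"
  shows "graded_ideal Rg {x + r * a | x r. x \<in> p}" (is "graded_ideal Rg ?J")
proof -
  have sub: "add_subgroup p" and mult: "\<And>r x. x \<in> p \<Longrightarrow> r * x \<in> p"
    and comp: "\<And>x g. x \<in> p \<Longrightarrow> gcomp Rg x g \<in> p"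
    using p by (auto simp: graded_ideal_def is_ideal_def)
  have zero: "0 \<in> ?J"
    using sub by (auto simp: add_subgroup_def intro!: exI[of _ 0])
  have add: "u + v \<in> ?J" if uv: "u \<in> ?J" "v \<in> ?J" for u v
  proof -
    obtain x r x' r' where "u = x + r * a" "x \<in> p" "v = x' + r' * a" "x' \<in> p"
      using uv by blast
    then have "u + v = (x + x') + (r + r') * a" "x + x' \<in> p"
      using sub by (simp_all add: algebra_simps add_subgroup_def)
    then show ?thesis by blast
  qed
  have neg: "- u \<in> ?J" and smult: "s * u \<in> ?J" and comp': "gcomp Rg u g \<in> ?J"
    if uJ: "u \<in> ?J" for u s g
  proof -
    obtain x r where u: "u = x + r * a" "x \<in> p"
      using uJ by blast
    have "- u = - x + (- r) * a" "- x \<in> p"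
      using u sub by (simp_all add: add_subgroup_def)
    then show "- u \<in> ?J" by blast
    have "s * u = s * x + (s * r) * a" "s * x \<in> p"
      using u mult by (simp_all add: distrib_left mult.assoc)
    then show "s * u \<in> ?J" by blast
    have "gcomp Rg u g = gcomp Rg x g + gcomp Rg r (g - h) * a" "gcomp Rg x g \<in> p"
      using u gcomp_add[OF direct_grading] gcomp_mult_homog[OF a] comp by simp_all
    then show "gcomp Rg u g \<in> ?J" by blast
  qed
  show ?thesis
    unfolding graded_ideal_def is_ideal_def add_subgroup_def
    by (intro conjI ballI allI impI zero add neg smult comp')
qed

lemma graded_prime_if_maximal_avoiding_powers:
  assumes p: "graded_ideal Rg p" and avoid: "\<forall>n>0. y ^ n \<notin> p"
    and maximal: "\<And>I. graded_ideal Rg I \<Longrightarrow> p \<subset> I \<Longrightarrow> \<exists>n>0. y ^ n \<in> I"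
  shows "graded_prime_ideal Rg p"
proof -
  have sub: "add_subgroup p" and mult: "\<And>r x. x \<in> p \<Longrightarrow> r * x \<in> p"
    using p by (auto simp: graded_ideal_def is_ideal_def)
  have reach: "\<exists>n>0. \<exists>x\<in>p. \<exists>r. y ^ n = x + r * a" if a: "a \<in> homog Rg" "a \<notin> p" for a
  proof -
    obtain h where h: "a \<in> Rg h" using a(1) by (auto simp: homog_def)
    let ?J = "{x + r * a | x r. x \<in> p}"
    have "x \<in> ?J" if "x \<in> p" for x
    proof -
      have "x = x + 0 * a" by simp
      then show ?thesis using that by blast
    qed
    moreover have "a \<in> ?J"
    proof -
      have "a = 0 + 1 * a" "0 \<in> p" using sub by (simp_all add: add_subgroup_def)
      then show ?thesis by blast
    qed
    ultimately have "p \<subset> ?J"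
      using a(2) by blast
    then show ?thesis
      using maximal[OF graded_ideal_add_principal[OF p h]] by blast
  qed
  have "a \<in> p \<or> b \<in> p" if a: "a \<in> homog Rg" and b: "b \<in> homog Rg" and ab: "a * b \<in> p" for a b
  proof (rule ccontr)
    assume "\<not> (a \<in> p \<or> b \<in> p)"
    then obtain n x r m x' s where "n > 0" "x \<in> p" "y ^ n = x + r * a"
      and "m > 0" "x' \<in> p" "y ^ m = x' + s * b"
      using reach a b by meson
    moreover have "(x + r * a) * (x' + s * b) = (x' + s * b) * x + (r * a) * x' + (r * s) * (a * b)"
      by (simp add: algebra_simps)
    ultimately have "y ^ (n + m) = (x' + s * b) * x + (r * a) * x' + (r * s) * (a * b)"
      "(x' + s * b) * x + (r * a) * x' + (r * s) * (a * b) \<in> p" "n + m > 0"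
      using mult ab sub by (simp_all add: power_add add_subgroup_def)
    then show False
      using avoid by metis
  qed
  moreover have "p \<noteq> UNIV"
    using avoid by (metis UNIV_I power_one_right zero_less_one)
  ultimately show ?thesis
    using p by (simp add: graded_prime_ideal_def)
qed

lemma exists_graded_prime_avoiding_powers:
  assumes J: "graded_ideal Rg J" and avoid: "\<forall>n>0. y ^ n \<notin> J"
  obtains p where "graded_prime_ideal Rg p" "J \<subseteq> p" "y \<notin> p"
proof -
  define F where "F = {I. graded_ideal Rg I \<and> J \<subseteq> I \<and> (\<forall>n>0. y ^ n \<notin> I)}"
  have "\<exists>p\<in>F. \<forall>I\<in>F. p \<subseteq> I \<longrightarrow> I = p"
  proof (rule subset_Zorn_nonempty)
    show "F \<noteq> {}"
      using J avoid by (auto simp: F_def)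
    show "\<Union>C \<in> F" if C: "C \<noteq> {}" "subset.chain F C" for C
    proof -
      have CF: "C \<subseteq> F"
        using C(2) by (simp add: subset_chain_def)
      have "subset.chain {I. graded_ideal Rg I} C"
        using C(2) CF by (auto simp: subset_chain_def F_def)
      with C(1) have "graded_ideal Rg (\<Union>C)"
        by (rule graded_ideal_Union_chain)
      moreover have "J \<subseteq> \<Union>C" "\<forall>n>0. y ^ n \<notin> \<Union>C"
        using C(1) CF by (auto simp: F_def)
      ultimately show ?thesis
        by (simp add: F_def)
    qed
  qed
  then obtain p where "p \<in> F" and maximal: "\<And>I. I \<in> F \<Longrightarrow> p \<subseteq> I \<Longrightarrow> I = p"
    by blast
  then have p: "graded_ideal Rg p" "J \<subseteq> p" "\<forall>n>0. y ^ n \<notin> p"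
    by (simp_all add: F_def)
  have "graded_prime_ideal Rg p"
  proof (rule graded_prime_if_maximal_avoiding_powers[OF p(1,3)])
    show "\<exists>n>0. y ^ n \<in> I" if I: "graded_ideal Rg I" "p \<subset> I" for I
    proof (rule ccontr)
      assume "\<not> (\<exists>n>0. y ^ n \<in> I)"
      moreover have "J \<subseteq> I"
        using I(2) p(2) by blast
      ultimately have "I \<in> F"
        using I(1) unfolding F_def by blast
      then show False
        using I(2) maximal by blast
    qed
  qed
  moreover have "y \<notin> p"
    using p(3) by (metis power_one_right zero_less_one)
  ultimately show thesis
    using that p(2) by blast
qed

end

section \<open>Graded modules and radicals of colon ideals\<close>

lemma graded_submodule_Inter:
  assumes "\<And>P. P \<in> F \<Longrightarrow> graded_submodule Mg smult P"
  shows "graded_submodule Mg smult (\<Inter>F)"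
  using assms unfolding graded_submodule_def is_submodule_def add_subgroup_def by blast

lemma annihilator_subset_colon:
  "graded_submodule Mg smult K \<Longrightarrow> colon smult {0} \<subseteq> colon smult K"
  by (auto simp: colon_def graded_submodule_def is_submodule_def add_subgroup_def)

locale gr_module =
  fixes Rg :: "'g::group_add \<Rightarrow> 'r::comm_ring_1 set"
    and Mg :: "'g \<Rightarrow> 'm::ab_group_add set"
    and smult :: "'r \<Rightarrow> 'm \<Rightarrow> 'm"
  assumes graded_module: "graded_module Rg Mg smult"
begin

sublocale gr_ring Rg
  using graded_module by unfold_locales (simp add: graded_module_def)

sublocale module smult
  using graded_module by (simp add: graded_module_def)

lemma direct_grading_M: "direct_grading Mg"
  using graded_module by (simp add: graded_module_def)

lemma smult_degree: "r \<in> Rg g \<Longrightarrow> m \<in> Mg h \<Longrightarrow> smult r m \<in> Mg (g + h)"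
  using graded_module by (simp add: graded_module_def)

lemma smult_homog: "r \<in> homog Rg \<Longrightarrow> m \<in> homog Mg \<Longrightarrow> smult r m \<in> homog Mg"
  unfolding homog_def using smult_degree by blast

lemma gcomp_smult_homog:
  "m \<in> Mg h \<Longrightarrow> gcomp Mg (smult r m) k = smult (gcomp Rg r (k - h)) m"
  by (rule gcomp_additive_shift[OF direct_grading direct_grading_M])
    (simp_all add: smult_degree scale_sum_left)

lemma in_colon_iff_homog:
  assumes "add_subgroup K"
  shows "r \<in> colon smult K \<longleftrightarrow> (\<forall>m\<in>homog Mg. smult r m \<in> K)"
proof
  assume homog: "\<forall>m\<in>homog Mg. smult r m \<in> K"
  have "smult r m \<in> K" for m
  proof -
    have "(\<Sum>h\<in>{h. gcomp Mg m h \<noteq> 0}. smult r (gcomp Mg m h)) \<in> K"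
      using homog gcomp_in_homog[OF direct_grading_M] by (intro add_subgroup_sum[OF assms]) blast
    then show ?thesis
      by (simp add: scale_sum_right[symmetric] sum_gcomp_support[OF direct_grading_M])
  qed
  then show "r \<in> colon smult K"
    by (simp add: colon_def)
qed (simp add: colon_def)

lemma colon_graded_ideal:
  assumes K: "graded_submodule Mg smult K"
  shows "graded_ideal Rg (colon smult K)"
proof -
  have sub: "is_submodule smult K" and comp: "\<And>m h. m \<in> K \<Longrightarrow> gcomp Mg m h \<in> K"
    using K by (auto simp: graded_submodule_def)
  then have ideal: "is_ideal (colon smult K)"
    unfolding is_ideal_def is_submodule_def add_subgroup_def colon_def
    by (simp add: scale_left_distrib scale_minus_left scale_scale[symmetric] del: scale_scale)
  have "gcomp Rg r g \<in> colon smult K" if r: "r \<in> colon smult K" for r g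
  proof -
    have "smult (gcomp Rg r g) m \<in> K" if m: "m \<in> Mg h" for m h
    proof -
      have "gcomp Mg (smult r m) (g + h) \<in> K"
        using r comp by (simp add: colon_def)
      then show ?thesis
        using gcomp_smult_homog[OF m, of r "g + h"] by (simp add: add.assoc)
    qed
    then show ?thesis
      using sub by (auto simp: in_colon_iff_homog is_submodule_def homog_def)
  qed
  then show ?thesis
    using ideal by (simp add: graded_ideal_def)
qed

lemma graded_prime_ideal_colon:
  assumes P: "graded_prime_submodule Rg Mg smult P"
  shows "graded_prime_ideal Rg (colon smult P)"
proof -
  have sub: "add_subgroup P" and prime: "\<And>r m. r \<in> homog Rg \<Longrightarrow> m \<in> homog Mg \<Longrightarrow>
      smult r m \<in> P \<Longrightarrow> m \<in> P \<or> r \<in> colon smult P"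
    using P by (auto simp: graded_prime_submodule_def graded_submodule_def is_submodule_def)
  have "b \<in> colon smult P" if a: "a \<in> homog Rg" and b: "b \<in> homog Rg"
    and ab: "a * b \<in> colon smult P" and na: "a \<notin> colon smult P" for a b
  proof -
    obtain m where m: "m \<in> homog Mg" "smult a m \<notin> P"
      using na by (auto simp: in_colon_iff_homog[OF sub])
    have "smult b (smult a m) \<in> P"
      using ab by (simp add: colon_def mult.commute)
    then show ?thesis
      using prime[OF b smult_homog[OF a m(1)]] m(2) by blast
  qed
  moreover have "1 \<notin> colon smult P"
    using P by (auto simp: colon_def graded_prime_submodule_def)
  ultimately show ?thesis
    using colon_graded_ideal P unfolding graded_prime_ideal_def graded_prime_submodule_def by blast
qed

lemma one_notin_Gr_colon:
  assumes "graded_submodule Mg smult Q" "Q \<noteq> UNIV"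
  shows "1 \<notin> Gr Rg (colon smult Q)"
proof
  assume "1 \<in> Gr Rg (colon smult Q)"
  then have "1 \<in> colon smult Q"
    using homog_in_Gr_iff[OF zero_in_graded_ideal[OF colon_graded_ideal[OF assms(1)]] one_homog]
    by simp
  then show False
    using assms(2) by (auto simp: colon_def)
qed

lemma exists_prime_submodule_avoiding:
  assumes Q: "graded_submodule Mg smult Q" "graded_primeful Rg Mg smult Q"
    and y: "y \<in> homog Rg" "y \<notin> Gr Rg (colon smult Q)"
  obtains P where "graded_prime_submodule Rg Mg smult P" "Q \<subseteq> P" "y \<notin> colon smult P"
proof -
  have J: "graded_ideal Rg (colon smult Q)"
    by (rule colon_graded_ideal[OF Q(1)])
  then have "\<forall>n>0. y ^ n \<notin> colon smult Q"
    using y homog_in_Gr_iff[OF zero_in_graded_ideal y(1)] by blast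
  then obtain p where "graded_prime_ideal Rg p" "colon smult Q \<subseteq> p" "y \<notin> p"
    using exists_graded_prime_avoiding_powers[OF J] by blast
  then show thesis
    using Q(2) that unfolding graded_primeful_def by blast
qed

lemma Gr_colon_eq_Inter_colon_primes:
  assumes Q: "graded_submodule Mg smult Q" "graded_primeful Rg Mg smult Q"
  shows "Gr Rg (colon smult Q) =
    (\<Inter>P\<in>{P. graded_prime_submodule Rg Mg smult P \<and> Q \<subseteq> P}. colon smult P)"
proof (intro equalityI subsetI INT_I)
  fix x P
  assume x: "x \<in> Gr Rg (colon smult Q)" and P: "P \<in> {P. graded_prime_submodule Rg Mg smult P \<and> Q \<subseteq> P}"
  then have "x \<in> Gr Rg (colon smult P)"
    using Gr_mono[of "colon smult Q" "colon smult P"] by (auto simp: colon_def)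
  then show "x \<in> colon smult P"
    using Gr_graded_prime_ideal[OF graded_prime_ideal_colon] P by auto
next
  fix x
  assume x: "x \<in> (\<Inter>P\<in>{P. graded_prime_submodule Rg Mg smult P \<and> Q \<subseteq> P}. colon smult P)"
  have "gcomp Rg x g \<in> Gr Rg (colon smult Q)" for g
  proof (rule ccontr)
    assume "gcomp Rg x g \<notin> Gr Rg (colon smult Q)"
    then obtain P where P: "graded_prime_submodule Rg Mg smult P" "Q \<subseteq> P"
      and "gcomp Rg x g \<notin> colon smult P"
      using exists_prime_submodule_avoiding[OF Q gcomp_in_homog[OF direct_grading]] by blast
    moreover have "graded_ideal Rg (colon smult P)"
      using P(1) colon_graded_ideal by (simp add: graded_prime_submodule_def)
    ultimately show False
      using x by (auto simp: graded_ideal_def)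
  qed
  then have "\<exists>n>0. gcomp Rg x g ^ n \<in> colon smult Q" for g
    using homog_in_Gr_iff[OF zero_in_graded_ideal[OF colon_graded_ideal[OF Q(1)]]
        gcomp_in_homog[OF direct_grading]] by blast
  then show "x \<in> Gr Rg (colon smult Q)"
    by (simp add: Gr_def)
qed

lemma Gr_subset_Gr_colon_iff:
  assumes Q: "graded_submodule Mg smult Q" "graded_primeful Rg Mg smult Q"
    and J: "graded_ideal Rg J"
  shows "Gr Rg J \<subseteq> Gr Rg (colon smult Q) \<longleftrightarrow> J \<subseteq> Gr Rg (colon smult Q)"
proof
  show "J \<subseteq> Gr Rg (colon smult Q)" if "Gr Rg J \<subseteq> Gr Rg (colon smult Q)"
    using that graded_ideal_subset_Gr[OF J] by blast
  assume J_sub: "J \<subseteq> Gr Rg (colon smult Q)"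
  have "Gr Rg J \<subseteq> colon smult P"
    if P: "graded_prime_submodule Rg Mg smult P" "Q \<subseteq> P" for P
  proof -
    have "J \<subseteq> colon smult P"
      using J_sub P unfolding Gr_colon_eq_Inter_colon_primes[OF Q] by blast
    then have "Gr Rg J \<subseteq> Gr Rg (colon smult P)"
      by (rule Gr_mono)
    then show ?thesis
      using Gr_graded_prime_ideal[OF graded_prime_ideal_colon[OF P(1)]] by simp
  qed
  then show "Gr Rg J \<subseteq> Gr Rg (colon smult Q)"
    unfolding Gr_colon_eq_Inter_colon_primes[OF Q] by blast
qed

lemma Gr_colon_qpSpec_prime:
  assumes Q: "Q \<in> qpSpec Rg Mg smult" and a: "a \<in> homog Rg" and b: "b \<in> homog Rg"
    and ab: "a * b \<in> Gr Rg (colon smult Q)"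
  shows "a \<in> Gr Rg (colon smult Q) \<or> b \<in> Gr Rg (colon smult Q)"
  \<comment> \<open>A graded prime P containing Q but avoiding b^n shows that b^n m is not in Gr_M(Q) for a
    suitable homogeneous m; as a^n (b^n m) lies in Q, quasi-primarity puts a^n into Gr((Q:M)).\<close>
proof (rule disjCI)
  assume nb: "b \<notin> Gr Rg (colon smult Q)"
  have sub: "graded_submodule Mg smult Q" and primeful: "graded_primeful Rg Mg smult Q"
    and quasi: "graded_quasi_primary_submodule Rg Mg smult Q"
    using Q by (auto simp: qpSpec_def graded_quasi_primary_submodule_def)
  have zero: "0 \<in> colon smult Q"
    by (rule zero_in_graded_ideal[OF colon_graded_ideal[OF sub]])
  obtain n where n: "n > 0" "(a * b) ^ n \<in> colon smult Q"
    using ab homog_in_Gr_iff[OF zero mult_homog[OF a b]] by blast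
  have "b ^ n \<notin> Gr Rg (colon smult Q)"
    using homog_in_Gr_if_power[OF zero b n(1)] nb by blast
  then obtain P where P: "graded_prime_submodule Rg Mg smult P" "Q \<subseteq> P"
    and "b ^ n \<notin> colon smult P"
    using exists_prime_submodule_avoiding[OF sub primeful power_homog[OF b]] by blast
  moreover have "add_subgroup P"
    using P(1) by (simp add: graded_prime_submodule_def graded_submodule_def is_submodule_def)
  ultimately obtain m where m: "m \<in> homog Mg" "smult (b ^ n) m \<notin> P"
    by (auto simp: in_colon_iff_homog)
  have "smult (a ^ n) (smult (b ^ n) m) \<in> Q"
    using n(2) by (simp add: colon_def power_mult_distrib)
  moreover have "smult (b ^ n) m \<notin> GrM Rg Mg smult Q"
    using m(2) P(1,2) by (auto simp: GrM_def)
  ultimately have "a ^ n \<in> Gr Rg (colon smult Q)"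
    using quasi power_homog[OF a] smult_homog[OF power_homog[OF b] m(1)]
    unfolding graded_quasi_primary_submodule_def by blast
  then show "a \<in> Gr Rg (colon smult Q)"
    by (rule homog_in_Gr_if_power[OF zero a n(1)])
qed

end

section \<open>The quasi-Zariski topology\<close>

lemma nontrivial_if_qpSpec:
  fixes Q :: "'m::ab_group_add set"
  assumes "Q \<in> qpSpec Rg Mg smult"
  shows "(UNIV :: 'm set) \<noteq> {0}"
proof
  assume "(UNIV :: 'm set) = {0}"
  moreover have "0 \<in> Q" "Q \<noteq> UNIV"
    using assms by (auto simp: qpSpec_def graded_quasi_primary_submodule_def
        graded_submodule_def is_submodule_def add_subgroup_def)
  ultimately show False
    by (metis UNIV_I UNIV_eq_I singletonD)
qed

lemma quasi_primaryfulD: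
  fixes smult :: "'r::comm_ring_1 \<Rightarrow> 'm::ab_group_add \<Rightarrow> 'm"
  assumes "quasi_primaryful Rg Mg smult" "(UNIV :: 'm set) \<noteq> {0}"
    and "graded_quasi_primary_ideal Rg q" "colon smult {0} \<subseteq> q"
  obtains Q where "Q \<in> qpSpec Rg Mg smult" "Gr Rg (colon smult Q) = Gr Rg q"
  using assms unfolding quasi_primaryful_def by blast

lemma qpV_subset_if_closed:
  assumes "qp_closed Rg Mg smult A" "Q \<in> A"
  shows "qpV Rg Mg smult Q \<subseteq> A"
  using assms by (auto simp: qp_closed_def qpV_def)

lemma self_in_qpV: "Q \<in> qpSpec Rg Mg smult \<Longrightarrow> Q \<in> qpV Rg Mg smult Q"
  by (simp add: qpV_def)

lemma qp_closed_qpV: "Q \<in> qpSpec Rg Mg smult \<Longrightarrow> qp_closed Rg Mg smult (qpV Rg Mg smult Q)"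
  by (auto simp: qp_closed_def qpSpec_def graded_quasi_primary_submodule_def)

lemma qp_irreducible_qpV:
  assumes "Q \<in> qpSpec Rg Mg smult"
  shows "qp_irreducible Rg Mg smult (qpV Rg Mg smult Q)"
  using self_in_qpV[OF assms] qpV_subset_if_closed[of Rg Mg smult _ Q]
  unfolding qp_irreducible_def by blast

lemma qp_closure_qpV:
  assumes "Q \<in> qpSpec Rg Mg smult"
  shows "qp_closure Rg Mg smult {Q} = qpV Rg Mg smult Q"
  using qp_closed_qpV[OF assms] self_in_qpV[OF assms] qpV_subset_if_closed[of Rg Mg smult _ Q]
  unfolding qp_closure_def by blast

context gr_module
begin

definition qpV_ideal :: "'r set \<Rightarrow> 'm set set" where
  "qpV_ideal I = {Q \<in> qpSpec Rg Mg smult. I \<subseteq> Gr Rg (colon smult Q)}"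

lemma qpV_eq_qpV_ideal_colon:
  assumes "graded_submodule Mg smult K"
  shows "qpV Rg Mg smult K = qpV_ideal (colon smult K)"
  using Gr_subset_Gr_colon_iff[OF _ _ colon_graded_ideal[OF assms]]
  by (auto simp: qpV_def qpV_ideal_def qpSpec_def graded_quasi_primary_submodule_def)

lemma qp_closed_qpV_ideal: "qp_closed Rg Mg smult (qpV_ideal I)"
proof -
  define K where "K = \<Inter>{P. graded_prime_submodule Rg Mg smult P \<and> I \<subseteq> colon smult P}"
  have K: "graded_submodule Mg smult K"
    unfolding K_def by (rule graded_submodule_Inter) (simp add: graded_prime_submodule_def)
  have "colon smult K \<subseteq> Gr Rg (colon smult Q) \<longleftrightarrow> I \<subseteq> Gr Rg (colon smult Q)"
    if Q: "graded_submodule Mg smult Q" "graded_primeful Rg Mg smult Q" for Q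
  proof
    have "I \<subseteq> colon smult K"
      by (auto simp: K_def colon_def)
    also assume "colon smult K \<subseteq> Gr Rg (colon smult Q)"
    finally show "I \<subseteq> Gr Rg (colon smult Q)" .
  next
    assume I: "I \<subseteq> Gr Rg (colon smult Q)"
    have "colon smult K \<subseteq> colon smult P"
      if P: "graded_prime_submodule Rg Mg smult P" "Q \<subseteq> P" for P
    proof -
      have "I \<subseteq> colon smult P"
        using I P unfolding Gr_colon_eq_Inter_colon_primes[OF Q] by blast
      then have "K \<subseteq> P"
        using P(1) by (auto simp: K_def)
      then show ?thesis
        by (auto simp: colon_def)
    qed
    then show "colon smult K \<subseteq> Gr Rg (colon smult Q)"
      unfolding Gr_colon_eq_Inter_colon_primes[OF Q] by blast
  qed
  then have "qpV Rg Mg smult K = qpV_ideal I"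
    by (auto simp: qpV_eq_qpV_ideal_colon[OF K] qpV_ideal_def qpSpec_def
        graded_quasi_primary_submodule_def)
  then show ?thesis
    using K by (auto simp: qp_closed_def)
qed

lemma exists_qpSpec_avoiding:
  assumes qpf: "quasi_primaryful Rg Mg smult" and nontrivial: "(UNIV :: 'm set) \<noteq> {0}"
    and J: "graded_ideal Rg J" "colon smult {0} \<subseteq> J"
    and c: "c \<in> homog Rg" "c \<notin> Gr Rg J"
  obtains Q where "Q \<in> qpV_ideal J" "c \<notin> Gr Rg (colon smult Q)"
proof -
  have "\<forall>n>0. c ^ n \<notin> J"
    using c homog_in_Gr_iff[OF zero_in_graded_ideal[OF J(1)] c(1)] by blast
  then obtain p where p: "graded_prime_ideal Rg p" "J \<subseteq> p" "c \<notin> p"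
    using exists_graded_prime_avoiding_powers[OF J(1)] by blast
  have "colon smult {0} \<subseteq> p"
    using J(2) p(2) by blast
  then obtain Q where "Q \<in> qpSpec Rg Mg smult" "Gr Rg (colon smult Q) = p"
    using quasi_primaryfulD[OF qpf nontrivial graded_quasi_primary_if_prime[OF p(1)]]
      Gr_graded_prime_ideal[OF p(1)] by metis
  then show thesis
    using that p(2,3) by (auto simp: qpV_ideal_def)
qed

lemma graded_quasi_primary_colon_if_irreducible:
  assumes qpf: "quasi_primaryful Rg Mg smult" and K: "graded_submodule Mg smult K"
    and irr: "qp_irreducible Rg Mg smult (qpV Rg Mg smult K)"
  shows "graded_quasi_primary_ideal Rg (colon smult K)"
proof -
  let ?q = "colon smult K" and ?Y = "qpV Rg Mg smult K"
  have Y: "?Y = qpV_ideal ?q"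
    by (rule qpV_eq_qpV_ideal_colon[OF K])
  obtain Q' where Q': "Q' \<in> ?Y"
    using irr by (auto simp: qp_irreducible_def)
  then have nontrivial: "(UNIV :: 'm set) \<noteq> {0}"
    using nontrivial_if_qpSpec by (auto simp: qpV_def)
  have ann: "colon smult {0} \<subseteq> ?q"
    by (rule annihilator_subset_colon[OF K])
  have "?q \<subseteq> Gr Rg (colon smult Q')" "1 \<notin> Gr Rg (colon smult Q')"
    using Q' one_notin_Gr_colon unfolding Y
    by (auto simp: qpV_ideal_def qpSpec_def graded_quasi_primary_submodule_def)
  then have proper: "?q \<noteq> UNIV"
    by blast
  have Gr_if_cover: "c \<in> Gr Rg ?q" if c: "c \<in> homog Rg" "?Y \<subseteq> qpV_ideal (insert c ?q)" for c
  proof (rule ccontr)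
    assume "c \<notin> Gr Rg ?q"
    then obtain Q where "Q \<in> ?Y" "c \<notin> Gr Rg (colon smult Q)"
      using exists_qpSpec_avoiding[OF qpf nontrivial colon_graded_ideal[OF K] ann c(1)] Y by blast
    then show False
      using c(2) by (auto simp: qpV_ideal_def)
  qed
  have "a \<in> Gr Rg ?q \<or> b \<in> Gr Rg ?q"
    if a: "a \<in> homog Rg" and b: "b \<in> homog Rg" and ab: "a * b \<in> ?q" for a b
  proof -
    have "?Y \<subseteq> qpV_ideal (insert a ?q) \<union> qpV_ideal (insert b ?q)"
      using ab Gr_colon_qpSpec_prime[OF _ a b] unfolding Y by (auto simp: qpV_ideal_def)
    then have "?Y \<subseteq> qpV_ideal (insert a ?q) \<or> ?Y \<subseteq> qpV_ideal (insert b ?q)"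
      using irr qp_closed_qpV_ideal unfolding qp_irreducible_def by blast
    then show ?thesis
      using Gr_if_cover a b by blast
  qed
  then show ?thesis
    using colon_graded_ideal[OF K] proper by (simp add: graded_quasi_primary_ideal_def)
qed

lemma irreducible_closed_eq_qpV:
  assumes qpf: "quasi_primaryful Rg Mg smult"
    and irr: "qp_irreducible Rg Mg smult Y" and closed: "qp_closed Rg Mg smult Y"
  obtains Q where "Q \<in> qpSpec Rg Mg smult" "Y = qpV Rg Mg smult Q"
proof -
  obtain K where K: "graded_submodule Mg smult K" and Y: "Y = qpV Rg Mg smult K"
    using closed by (auto simp: qp_closed_def)
  obtain Q' where "Q' \<in> qpSpec Rg Mg smult"
    using irr by (auto simp: qp_irreducible_def Y qpV_def)
  then have nontrivial: "(UNIV :: 'm set) \<noteq> {0}"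
    by (rule nontrivial_if_qpSpec)
  have "graded_quasi_primary_ideal Rg (colon smult K)"
    using graded_quasi_primary_colon_if_irreducible[OF qpf K] irr by (simp add: Y)
  then obtain Q where "Q \<in> qpSpec Rg Mg smult" "Gr Rg (colon smult Q) = Gr Rg (colon smult K)"
    using quasi_primaryfulD[OF qpf nontrivial _ annihilator_subset_colon[OF K]] by metis
  then show thesis
    using that by (auto simp: Y qpV_def)
qed

end

theorem theorem4p9:
  fixes Rg :: "'g::group_add \<Rightarrow> 'r::comm_ring_1 set"
    and Mg :: "'g \<Rightarrow> 'm::ab_group_add set"
    and smult :: "'r \<Rightarrow> 'm \<Rightarrow> 'm"
    and Y :: "'m set set"
  assumes "graded_module Rg Mg smult"
    and "quasi_primaryful Rg Mg smult"
    and "Y \<subseteq> qpSpec Rg Mg smult"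
  shows "(qp_irreducible Rg Mg smult Y \<and> qp_closed Rg Mg smult Y \<longleftrightarrow>
            (\<exists>Q\<in>qpSpec Rg Mg smult. Y = qpV Rg Mg smult Q))
         \<and> (qp_irreducible Rg Mg smult Y \<and> qp_closed Rg Mg smult Y \<longrightarrow>
            (\<exists>y\<in>Y. Y = qp_closure Rg Mg smult {y}))"
proof -
  interpret gr_module Rg Mg smult
    by (rule gr_module.intro[OF assms(1)])
  have "\<exists>Q\<in>qpSpec Rg Mg smult. Y = qpV Rg Mg smult Q"
    if "qp_irreducible Rg Mg smult Y" "qp_closed Rg Mg smult Y"
    using irreducible_closed_eq_qpV[OF assms(2) that] by blast
  then show ?thesis
    using qp_irreducible_qpV qp_closed_qpV qp_closure_qpV self_in_qpV by metis
qed

end
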